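(* Let $\mathcal{P}$ be a finite nonempty set of stochastic trees and $\Pi$ any partition of $S_\mathcal{P}$ in which the start states of all trees in $\mathcal{P}$ lie in the same class. Then $P \preceq \mathcal{P}/\Pi$ for every $P \in \mathcal{P}$.
   Context: An LPTS is a tuple $\langle S,s^0,\alpha,\tau\rangle$ with finite state set $S$, start state $s^0$, finite action set $\alpha$, finite $\tau\subseteq S\times\alpha\times\mathrm{Dist}(S)$, where $\mathrm{Dist}(S)$ is the set of discrete probability distributions over $S$ (rational probabilities); write $s\xrightarrow{a}\mu$. A stochastic tree is an LPTS whose start state is in the support of no transition's distribution and every other state is in the support of exactly one transition's distribution. Strong simulation: for $\mu_1\in\mathrm{Dist}(S_1)$, $\mu_2\in\mathrm{Dist}(S_2)$, $R\subseteq S_1\times S_2$, $\mu_1\sqsubseteq_R\mu_2$ iff there is $w:S_1\times S_2\to\mathbb{Q}\cap[0,1]$ with $\sum_{s_2}w(s_1,s_2)=\mu_1(s_1)$, $\sum_{s_1}w(s_1,s_2)=\mu_2(s_2)$ and $w(s_1,s_2)>0\Rightarrow s_1Rs_2$; $R$ is a strong simulation iff $s_1Rs_2$ and $s_1\xrightarrow{a}\mu_1$ imply some $s_2\xrightarrow{a}\mu_2$ with $\mu_1\sqsubseteq_R\mu_2$; $L_1\preceq L_2$ iff a strong simulation relates the start states. $S_\mathcal{P}$ is the (disjoint) union of the state sets of the trees in $\mathcal{P}$. For a partition $\Pi$ of $S_\mathcal{P}$ with classes $E_\Pi$ and class $[s]$ of $s$, the quotient $\mathcal{P}/\Pi$ is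 the LPTS with states $E_\Pi$, start state the common class of the start states, actions $\bigcup_{P\in\mathcal{P}}\alpha_P$, and a transition $e\xrightarrow{a}\mu$ iff some tree $P\in\mathcal{P}$ has a transition $s\xrightarrow{a}\mu_p$ with $[s]=e$ and $\mu(e')=\sum_{s'\in e'}\mu_p(s')$ for all $e'\in E_\Pi$. *)

theory Defs
  imports Complex_Main "HOL-Library.Disjoint_Sets"
begin

record ('s, 'a) lpts =
  states :: "'s set"
  start  :: 's
  acts   :: "'a set"
  trans  :: "('s \<times> 'a \<times> ('s \<Rightarrow> rat)) set"

definition is_dist :: "'s set \<Rightarrow> ('s \<Rightarrow> rat) \<Rightarrow> bool" where
  "is_dist S \<mu> \<longleftrightarrow> (\<forall>s. 0 \<le> \<mu> s) \<and> (\<forall>s. s \<notin> S \<longrightarrow> \<mu> s = 0) \<and> (\<Sum>s\<in>S. \<mu> s) = 1"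

definition is_lpts :: "('s, 'a) lpts \<Rightarrow> bool" where
  "is_lpts L \<longleftrightarrow> finite (states L) \<and> start L \<in> states L \<and> finite (acts L) \<and> finite (trans L)
     \<and> (\<forall>(s, a, \<mu>) \<in> trans L. s \<in> states L \<and> a \<in> acts L \<and> is_dist (states L) \<mu>)"

definition stochastic_tree :: "('s, 'a) lpts \<Rightarrow> bool" where
  "stochastic_tree L \<longleftrightarrow> is_lpts L
     \<and> (\<forall>(s, a, \<mu>) \<in> trans L. \<mu> (start L) = 0)
     \<and> (\<forall>t \<in> states L - {start L}. card {(s, a, \<mu>) \<in> trans L. 0 < \<mu> t} = 1)"

definition lift_rel :: "'s1 set \<Rightarrow> 's2 set \<Rightarrow> ('s1 \<times> 's2) set \<Rightarrow> ('s1 \<Rightarrow> rat) \<Rightarrow> ('s2 \<Rightarrow> rat) \<Rightarrow> bool" where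
  "lift_rel S1 S2 R \<mu>1 \<mu>2 \<longleftrightarrow> (\<exists>w :: 's1 \<Rightarrow> 's2 \<Rightarrow> rat.
       (\<forall>x y. 0 \<le> w x y \<and> w x y \<le> 1)
     \<and> (\<forall>x\<in>S1. (\<Sum>y\<in>S2. w x y) = \<mu>1 x)
     \<and> (\<forall>y\<in>S2. (\<Sum>x\<in>S1. w x y) = \<mu>2 y)
     \<and> (\<forall>x y. 0 < w x y \<longrightarrow> (x, y) \<in> R))"

definition strong_simulation :: "('s1, 'a) lpts \<Rightarrow> ('s2, 'a) lpts \<Rightarrow> ('s1 \<times> 's2) set \<Rightarrow> bool" where
  "strong_simulation L1 L2 R \<longleftrightarrow> R \<subseteq> states L1 \<times> states L2 \<and>
     (\<forall>(s1, s2) \<in> R. \<forall>a \<mu>1. (s1, a, \<mu>1) \<in> trans L1 \<longrightarrow>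
        (\<exists>\<mu>2. (s2, a, \<mu>2) \<in> trans L2 \<and> lift_rel (states L1) (states L2) R \<mu>1 \<mu>2))"

definition simulated :: "('s1, 'a) lpts \<Rightarrow> ('s2, 'a) lpts \<Rightarrow> bool" (infix "\<preceq>\<^sub>s" 50) where
  "L1 \<preceq>\<^sub>s L2 \<longleftrightarrow> (\<exists>R. strong_simulation L1 L2 R \<and> (start L1, start L2) \<in> R)"

text \<open>Disjoint union of the state sets: states tagged with the tree they belong to.\<close>
definition union_states :: "('s, 'a) lpts set \<Rightarrow> (('s, 'a) lpts \<times> 's) set" where
  "union_states Ps = {(P, s). P \<in> Ps \<and> s \<in> states P}"

definition cls :: "'x set set \<Rightarrow> 'x \<Rightarrow> 'x set" where
  "cls Part x = (THE e. e \<in> Part \<and> x \<in> e)"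

definition lift_dist :: "(('s, 'a) lpts \<times> 's) set set \<Rightarrow> ('s, 'a) lpts \<Rightarrow> ('s \<Rightarrow> rat)
    \<Rightarrow> (('s, 'a) lpts \<times> 's) set \<Rightarrow> rat" where
  "lift_dist Part P \<mu> e = (if e \<in> Part then (\<Sum>s'\<in>{s' \<in> states P. (P, s') \<in> e}. \<mu> s') else 0)"

definition quot_lpts :: "('s, 'a) lpts set \<Rightarrow> (('s, 'a) lpts \<times> 's) set set
    \<Rightarrow> ((('s, 'a) lpts \<times> 's) set, 'a) lpts" where
  "quot_lpts Ps Part = \<lparr> states = Part,
     start = cls Part (let P = (SOME P. P \<in> Ps) in (P, start P)),
     acts = (\<Union>P\<in>Ps. acts P),
     trans = {(e, a, \<mu>). \<exists>P\<in>Ps. \<exists>s \<mu>p. (s, a, \<mu>p) \<in> trans P \<and> cls Part (P, s) = e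
                                  \<and> \<mu> = lift_dist Part P \<mu>p} \<rparr>"

end

theory Submission
  imports Defs
begin

text \<open>Each tree is simulated by the quotient via the graph of the quotient map
  s \<mapsto> [(P, s)]: a transition s \<rightarrow>a \<mu> of P induces, by definition of the quotient, the
  transition [(P, s)] \<rightarrow>a \<mu>/\<Pi>, and the weight function that places the mass \<mu> s on the
  pair (s, [(P, s)]) witnesses \<mu> \<sqsubseteq> \<mu>/\<Pi>. The start states are related because all of them
  lie in the start class.\<close>

lemma cls_eq:
  assumes "partition_on A Part" "e \<in> Part" "x \<in> e"
  shows "cls Part x = e"
  unfolding cls_def
proof (rule the_equality)
  fix e' assume "e' \<in> Part \<and> x \<in> e'"
  then show "e' = e"
    using assms disjointD[OF partition_onD2[OF assms(1)]] by blast
qed (use assms in blast)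

lemma cls_in_partition:
  assumes "partition_on A Part" "x \<in> A"
  shows "cls Part x \<in> Part" and "x \<in> cls Part x"
proof -
  obtain e where "e \<in> Part" "x \<in> e"
    using assms partition_onD1 by blast
  then show "cls Part x \<in> Part" "x \<in> cls Part x"
    using cls_eq[OF assms(1)] by simp_all
qed

lemma cls_eq_iff_mem:
  assumes "partition_on A Part" "e \<in> Part" "x \<in> A"
  shows "e = cls Part x \<longleftrightarrow> x \<in> e"
  using cls_eq[OF assms(1,2)] cls_in_partition[OF assms(1,3)] by metis

lemma is_dist_le_1:
  assumes "finite S" "is_dist S \<mu>"
  shows "\<mu> x \<le> 1"
proof (cases "x \<in> S")
  case True
  then have "\<mu> x \<le> (\<Sum>s\<in>S. \<mu> s)"
    using assms by (intro member_le_sum) (auto simp: is_dist_def)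
  then show ?thesis using assms(2) by (simp add: is_dist_def)
next
  case False
  then show ?thesis using assms(2) by (simp add: is_dist_def)
qed

lemma finite_union_states:
  assumes "finite Ps" "\<And>P. P \<in> Ps \<Longrightarrow> finite (states P)"
  shows "finite (union_states Ps)"
proof (rule finite_subset)
  show "union_states Ps \<subseteq> (\<Union>P\<in>Ps. Pair P ` states P)"
    unfolding union_states_def by auto
  show "finite (\<Union>P\<in>Ps. Pair P ` states P)"
    using assms by simp
qed

definition quot_graph :: "(('s, 'a) lpts \<times> 's) set set \<Rightarrow> ('s, 'a) lpts
    \<Rightarrow> ('s \<times> (('s, 'a) lpts \<times> 's) set) set" where
  "quot_graph Part P = {(s, cls Part (P, s)) | s. s \<in> states P}"

lemma lift_rel_quot_graph:
  assumes part: "partition_on A Part" and "finite Part" "finite (states P)"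
    and dist: "is_dist (states P) \<mu>"
    and in_A: "\<And>s. s \<in> states P \<Longrightarrow> (P, s) \<in> A"
  shows "lift_rel (states P) Part (quot_graph Part P) \<mu> (lift_dist Part P \<mu>)"
proof -
  define w where "w x y = (if x \<in> states P \<and> y = cls Part (P, x) then \<mu> x else 0)" for x y
  show ?thesis
    unfolding lift_rel_def
  proof (intro exI[of _ w] conjI allI ballI impI)
    fix x y
    show "0 \<le> w x y" "w x y \<le> 1"
      using dist is_dist_le_1[OF \<open>finite (states P)\<close> dist] by (auto simp: w_def is_dist_def)
    show "0 < w x y \<Longrightarrow> (x, y) \<in> quot_graph Part P"
      by (auto simp: w_def quot_graph_def split: if_splits)
  next
    fix x assume x: "x \<in> states P"
    have "(\<Sum>y\<in>Part. w x y) = (\<Sum>y\<in>Part. if y = cls Part (P, x) then \<mu> x else 0)"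
      using x by (intro sum.cong) (auto simp: w_def)
    also have "\<dots> = \<mu> x"
      using \<open>finite Part\<close> cls_in_partition(1)[OF part in_A[OF x]] by simp
    finally show "(\<Sum>y\<in>Part. w x y) = \<mu> x" .
  next
    fix y assume y: "y \<in> Part"
    have "(\<Sum>x\<in>states P. w x y) = (\<Sum>x\<in>states P. if (P, x) \<in> y then \<mu> x else 0)"
      using cls_eq_iff_mem[OF part y in_A] by (intro sum.cong) (auto simp: w_def)
    also have "\<dots> = lift_dist Part P \<mu> y"
      using \<open>finite (states P)\<close> y by (simp add: sum.inter_filter lift_dist_def)
    finally show "(\<Sum>x\<in>states P. w x y) = lift_dist Part P \<mu> y" .
  qed
qed

lemma strong_simulation_quot_graph:
  assumes part: "partition_on (union_states Ps) Part" and "finite Part"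
    and "P \<in> Ps" "is_lpts P"
  shows "strong_simulation P (quot_lpts Ps Part) (quot_graph Part P)"
proof -
  have in_U: "(P, s) \<in> union_states Ps" if "s \<in> states P" for s
    using that \<open>P \<in> Ps\<close> by (simp add: union_states_def)
  have "\<exists>\<mu>'. (cls Part (P, s), a, \<mu>') \<in> trans (quot_lpts Ps Part)
            \<and> lift_rel (states P) Part (quot_graph Part P) \<mu> \<mu>'"
    if "(s, a, \<mu>) \<in> trans P" for s a \<mu>
  proof (intro exI conjI)
    show "(cls Part (P, s), a, lift_dist Part P \<mu>) \<in> trans (quot_lpts Ps Part)"
      using that \<open>P \<in> Ps\<close> by (auto simp: quot_lpts_def)
    show "lift_rel (states P) Part (quot_graph Part P) \<mu> (lift_dist Part P \<mu>)"
      using that \<open>is_lpts P\<close>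
      by (intro lift_rel_quot_graph[OF part \<open>finite Part\<close>] in_U) (auto simp: is_lpts_def)
  qed
  moreover have "quot_graph Part P \<subseteq> states P \<times> Part"
    using cls_in_partition(1)[OF part in_U] by (auto simp: quot_graph_def)
  ultimately show ?thesis
    by (auto simp: strong_simulation_def quot_graph_def quot_lpts_def)
qed

lemma start_quot_lpts:
  assumes "partition_on (union_states Ps) Part" "Ps \<noteq> {}"
    and "e \<in> Part" "\<forall>P\<in>Ps. (P, start P) \<in> e"
  shows "start (quot_lpts Ps Part) = e"
proof -
  have "(SOME P. P \<in> Ps) \<in> Ps"
    using \<open>Ps \<noteq> {}\<close> by (simp add: some_in_eq)
  then show ?thesis
    using assms(4) cls_eq[OF assms(1,3)] by (simp add: quot_lpts_def Let_def)
qed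

theorem lemma6:
  fixes Ps :: "('s, 'a) lpts set" and Part :: "(('s, 'a) lpts \<times> 's) set set"
  assumes "finite Ps" and "Ps \<noteq> {}"
    and "\<forall>P\<in>Ps. stochastic_tree P"
    and "partition_on (union_states Ps) Part"
    and "\<exists>e\<in>Part. \<forall>P\<in>Ps. (P, start P) \<in> e"
  shows "\<forall>P\<in>Ps. P \<preceq>\<^sub>s quot_lpts Ps Part"
proof
  fix P assume "P \<in> Ps"
  have lpts: "is_lpts Q" if "Q \<in> Ps" for Q
    using assms(3) that by (simp add: stochastic_tree_def)
  have "finite (union_states Ps)"
    using finite_union_states[OF assms(1)] lpts by (simp add: is_lpts_def)
  then have "finite Part"
    using assms(4) by (metis finite_UnionD partition_onD1)
  obtain e where e: "e \<in> Part" "\<forall>Q\<in>Ps. (Q, start Q) \<in> e"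
    using assms(5) by blast
  have "(start P, start (quot_lpts Ps Part)) \<in> quot_graph Part P"
    using lpts[OF \<open>P \<in> Ps\<close>] e \<open>P \<in> Ps\<close>
      start_quot_lpts[OF assms(4,2) e] cls_eq[OF assms(4) e(1)]
    by (force simp: quot_graph_def is_lpts_def)
  then show "P \<preceq>\<^sub>s quot_lpts Ps Part"
    using strong_simulation_quot_graph[OF assms(4) \<open>finite Part\<close> \<open>P \<in> Ps\<close> lpts[OF \<open>P \<in> Ps\<close>]]
    unfolding simulated_def by blast
qed

end
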